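(* Let $\alpha_0,\dots,\alpha_{L-1}$ be i.i.d. uniform on $(-\tfrac12,\tfrac12)$, extended $L$-periodically, and let $\omega_i=\Delta\alpha_i-[\![\Delta\alpha_i]\!]$ for $i=0,\dots,L-1$. Then $(\omega_0,\dots,\omega_{L-1})$ has the distribution obtained by taking i.i.d. uniform $(-\tfrac12,\tfrac12)$ variates and conditioning them to sum to an integer; that is, $\vec\omega$ is distributed according to the normalized surface measure on the intersection of the cube $(-\tfrac12,\tfrac12)^L$ with the family of hyperplanes $\{x_0+x_1+\dots+x_{L-1}\in\mathbb Z\}$.
   Context: $\Delta$ is the periodic discrete Laplacian, $\Delta\alpha_i=\alpha_{i-1}-2\alpha_i+\alpha_{i+1}$ with indices mod $L$; $[\![x]\!]$ is the integer nearest to $x$. *)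

theory Defs
  imports "HOL-Probability.Probability"
begin

text \<open>Vectors in R^L are represented as extensional functions nat => real on {..<L}.\<close>

definition lap :: "nat \<Rightarrow> (nat \<Rightarrow> real) \<Rightarrow> nat \<Rightarrow> real" where
  "lap L a i = a ((i + L - 1) mod L) - 2 * a (i mod L) + a ((i + 1) mod L)"

definition omega :: "nat \<Rightarrow> (nat \<Rightarrow> real) \<Rightarrow> nat \<Rightarrow> real" where
  "omega L a = (\<lambda>i\<in>{..<L}. lap L a i - of_int (round (lap L a i)))"

definition cube :: "nat \<Rightarrow> (nat \<Rightarrow> real) set" where
  "cube L = PiE {..<L} (\<lambda>_. {-1/2<..<1/2})"

definition hyp_param :: "nat \<Rightarrow> int \<Rightarrow> (nat \<Rightarrow> real) \<Rightarrow> nat \<Rightarrow> real" where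
  "hyp_param L k y = (\<lambda>i\<in>{..<L}. if i < L - 1 then y i else of_int k - (\<Sum>j<L - 1. y j))"

text \<open>(L-1)-dimensional surface measure of a set B contained in the family of hyperplanes
  {x_0+...+x_{L-1} \<in> Z}: on each hyperplane, the surface measure is the pushforward of
  (L-1)-dimensional Lebesgue measure under the graph map, times the Jacobian factor sqrt L.\<close>
definition surf :: "nat \<Rightarrow> (nat \<Rightarrow> real) set \<Rightarrow> ennreal" where
  "surf L B = (\<integral>\<^sup>+ k. ennreal (sqrt (real L)) *
      emeasure (PiM {..<L - 1} (\<lambda>_. lborel)) (hyp_param L k -` B \<inter> space (PiM {..<L - 1} (\<lambda>_. lborel)))
    \<partial>count_space UNIV)"

definition norm_surf :: "nat \<Rightarrow> (nat \<Rightarrow> real) set \<Rightarrow> ennreal" where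
  "norm_surf L A = surf L (A \<inter> cube L) / surf L (cube L)"

end

theory Submission
  imports Defs
begin

text \<open>
  Write \<open>\<omega> = W (Y \<alpha>)\<close> (\<open>int_sum_ext\<close> and \<open>lap_wrap\<close> below) with \<open>Y \<alpha> = (\<Delta>\<alpha>\<^sub>i mod 1)\<^bsub>i<L-1\<^esub>\<close> and \<open>W y\<close> appending the coordinate
  \<open>-(y\<^sub>0 + \<dots> + y\<^bsub>L-2\<^esub>) mod 1\<close>; this is possible because \<open>\<Sum>\<^sub>i \<Delta>\<alpha>\<^sub>i = 0\<close>.
  If \<open>y\<close> is uniform on \<open>(-1/2,1/2)\<close> and \<open>c \<noteq> 0\<close> is an integer, then \<open>c y + b mod 1\<close> is again uniform;
  hence maps that are triangular with nonzero integer diagonal, reduced mod 1, preserve the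
  uniform product measure. The map \<open>\<alpha> \<mapsto> (\<alpha>\<^sub>1 - \<alpha>\<^sub>0, \<Delta>\<alpha>\<^sub>1, \<dots>, \<Delta>\<alpha>\<^bsub>L-2\<^esub>) mod 1\<close> is of this kind, and
  \<open>\<Delta>\<alpha>\<^sub>0 = L (\<alpha>\<^sub>1 - \<alpha>\<^sub>0) + \<Sum>\<^sub>j (L - 1 - j) \<Delta>\<alpha>\<^sub>j\<close> turns it into \<open>Y\<close> by one more shear with diagonal
  coefficient \<open>L\<close>. So \<open>Y \<alpha>\<close> is uniform on the \<open>(L-1)\<close>-cube. On the other side, above almost every
  point \<open>y\<close> of that cube exactly one hyperplane \<open>{\<Sum> x = k}\<close> meets \<open>(-1/2,1/2)\<^sup>L\<close>, at the point
  \<open>W y\<close>; so the surface measure of the slices is \<open>\<surd>L\<close> times the law of \<open>W y\<close>, and the Jacobian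
  factors cancel upon normalisation.
\<close>

section \<open>Reduction modulo one\<close>

definition wrap :: "real \<Rightarrow> real" where
  "wrap x = x - of_int (round x)"

lemma borel_measurable_wrap [measurable]: "wrap \<in> borel_measurable borel"
proof -
  have "(\<lambda>x::real. real_of_int \<lfloor>x + 1/2\<rfloor>) \<in> borel_measurable borel"
    using measurable_compose[OF _ borel_measurable_real_floor, of "\<lambda>x. x + 1/2" borel] by simp
  then show ?thesis unfolding wrap_def round_def by measurable
qed

lemma round_add_of_int: "round (x + of_int n) = round x + n"
  unfolding round_def by (metis add.commute add.left_commute floor_add_int)

lemma wrap_add_of_int [simp]: "wrap (x + of_int n) = wrap x"
  unfolding wrap_def by (simp add: round_add_of_int)

lemma wrap_ge: "-1/2 \<le> wrap x" and wrap_less: "wrap x < 1/2"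
  unfolding wrap_def using of_int_round_le[of x] of_int_round_gt[of x] by auto

lemma wrap_eq_if_diff_int: "x - y = of_int n \<Longrightarrow> wrap x = wrap y"
  by (metis add_diff_cancel_left' diff_add_cancel wrap_add_of_int)

lemma indicator_wrap_split:
  fixes h :: "real \<Rightarrow> 'a :: semiring_1" and s z :: real
  defines "r \<equiv> of_int (round s) :: real"
  shows "indicator {s<..<s+1} z * h (wrap z)
       = indicator {s<..<r + 1/2} z * h (z - r) + indicator {r + 1/2..<s+1} z * h (z - r - 1)"
proof -
  have r: "s - 1/2 < r" "r \<le> s + 1/2"
    unfolding r_def using of_int_round_gt[of s] of_int_round_le[of s] by auto
  show ?thesis
  proof (cases "z \<in> {s<..<r + 1/2}")
    case True
    then have "round z = round s" using r unfolding r_def by (intro round_unique) auto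
    then show ?thesis using True r unfolding r_def wrap_def by (auto simp: indicator_def)
  next
    case outside: False
    show ?thesis
    proof (cases "z \<in> {r + 1/2..<s+1}")
      case True
      then have "round z = round s + 1" using r unfolding r_def by (intro round_unique) auto
      then show ?thesis
        using True outside r unfolding r_def wrap_def by (auto simp: indicator_def algebra_simps)
    qed (use outside r in \<open>auto simp: indicator_def\<close>)
  qed
qed

lemma nn_integral_wrap_unit_interval:
  fixes h :: "real \<Rightarrow> ennreal"
  assumes [measurable]: "h \<in> borel_measurable borel"
  shows "(\<integral>\<^sup>+z. indicator {s<..<s+1} z * h (wrap z) \<partial>lborel)
       = (\<integral>\<^sup>+z. indicator {-1/2<..<1/2} z * h z \<partial>lborel)"
proof -
  define r where "r = (of_int (round s) :: real)"
  define t where "t = s - r"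
  have t: "-1/2 \<le> t" "t < 1/2"
    using wrap_ge[of s] wrap_less[of s] unfolding t_def r_def wrap_def by auto
  have "(\<integral>\<^sup>+z. indicator {s<..<s+1} z * h (wrap z) \<partial>lborel) =
     (\<integral>\<^sup>+z. indicator {s<..<r + 1/2} z * h (z - r) \<partial>lborel) +
     (\<integral>\<^sup>+z. indicator {r + 1/2..<s+1} z * h (z - r - 1) \<partial>lborel)"
    unfolding indicator_wrap_split r_def by (rule nn_integral_add) measurable
  also have "(\<integral>\<^sup>+z. indicator {s<..<r + 1/2} z * h (z - r) \<partial>lborel)
      = (\<integral>\<^sup>+w. indicator {t<..<1/2} w * h w \<partial>lborel)"
    by (subst nn_integral_real_affine[where c=1 and t=r])
       (auto simp: t_def indicator_def intro!: nn_integral_cong)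
  also have "(\<integral>\<^sup>+z. indicator {r + 1/2..<s+1} z * h (z - r - 1) \<partial>lborel)
      = (\<integral>\<^sup>+w. indicator {-1/2..<t} w * h w \<partial>lborel)"
    by (subst nn_integral_real_affine[where c=1 and t="r + 1"])
       (auto simp: t_def indicator_def intro!: nn_integral_cong)
  also have "(\<integral>\<^sup>+w. indicator {t<..<1/2} w * h w \<partial>lborel) + (\<integral>\<^sup>+w. indicator {-1/2..<t} w * h w \<partial>lborel)
     = (\<integral>\<^sup>+w. indicator {t<..<1/2} w * h w + indicator {-1/2..<t} w * h w \<partial>lborel)"
    by (rule nn_integral_add[symmetric]) measurable
  also have "\<dots> = (\<integral>\<^sup>+z. indicator {-1/2<..<1/2} z * h z \<partial>lborel)"
  proof (rule nn_integral_cong_AE)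
    have "AE w in lborel. w \<noteq> t" "AE w in lborel. w \<noteq> -1/2" by (rule AE_lborel_singleton)+
    then show "AE w in lborel. indicator {t<..<1/2} w * h w + indicator {-1/2..<t} w * h w
        = indicator {-1/2<..<1/2} w * h w"
      by eventually_elim (use t in \<open>auto simp: indicator_def\<close>)
  qed
  finally show ?thesis .
qed

lemma nn_integral_wrap_interval:
  fixes h :: "real \<Rightarrow> ennreal"
  assumes [measurable]: "h \<in> borel_measurable borel"
  shows "(\<integral>\<^sup>+z. indicator {s<..<s + real n} z * h (wrap z) \<partial>lborel)
       = of_nat n * (\<integral>\<^sup>+z. indicator {-1/2<..<1/2} z * h z \<partial>lborel)"
proof (induction n)
  case (Suc n)
  let ?I = "\<lambda>a b z. indicator {a<..<b} z * h (wrap z)"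
  have "(\<integral>\<^sup>+z. ?I s (s + real (Suc n)) z \<partial>lborel)
      = (\<integral>\<^sup>+z. ?I s (s + real n) z + ?I (s + real n) (s + real n + 1) z \<partial>lborel)"
  proof (rule nn_integral_cong_AE)
    show "AE z in lborel. ?I s (s + real (Suc n)) z = ?I s (s + real n) z + ?I (s + real n) (s + real n + 1) z"
      using AE_lborel_singleton[of "s + real n"] by eventually_elim (auto simp: indicator_def)
  qed
  also have "\<dots> = (\<integral>\<^sup>+z. ?I s (s + real n) z \<partial>lborel) + (\<integral>\<^sup>+z. ?I (s + real n) (s + real n + 1) z \<partial>lborel)"
    by (rule nn_integral_add) measurable
  finally show ?case
    unfolding Suc nn_integral_wrap_unit_interval[OF assms] by (simp add: distrib_right)
qed simp

lemma nn_integral_wrap_affine: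
  fixes h :: "real \<Rightarrow> ennreal" and c :: int
  assumes [measurable]: "h \<in> borel_measurable borel" and "c \<noteq> 0"
  shows "(\<integral>\<^sup>+y. indicator {-1/2<..<1/2} y * h (wrap (of_int c * y + b)) \<partial>lborel)
       = (\<integral>\<^sup>+z. indicator {-1/2<..<1/2} z * h z \<partial>lborel)"
    (is "?Y = ?X")
proof -
  define n where "n = nat \<bar>c\<bar>"
  have n: "real n = \<bar>of_int c\<bar>" "n > 0" using \<open>c \<noteq> 0\<close> by (auto simp: n_def)
  \<comment> \<open>Integrate over an interval of length \<open>n\<close> in two ways: directly, and after the substitution \<open>z = b + c y\<close>.\<close>
  define f where "f z = indicator {b - real n/2<..<b - real n/2 + real n} z * h (wrap z)" for z
  have [measurable]: "f \<in> borel_measurable borel" unfolding f_def by measurable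
  have "f (b + of_int c * y) = indicator {-1/2<..<1/2} y * h (wrap (of_int c * y + b))" for y
  proof -
    have "b + of_int c * y \<in> {b - real n/2<..<b - real n/2 + real n} \<longleftrightarrow> \<bar>of_int c * y\<bar> < real n * (1/2)"
      by (auto simp: abs_less_iff)
    also have "\<bar>of_int c * y\<bar> = real n * \<bar>y\<bar>"
      by (simp add: abs_mult n(1))
    also have "real n * \<bar>y\<bar> < real n * (1/2) \<longleftrightarrow> \<bar>y\<bar> < 1/2"
      using n(2) by (intro mult_less_cancel_left_pos) simp
    finally have "b + of_int c * y \<in> {b - real n/2<..<b - real n/2 + real n} \<longleftrightarrow> \<bar>y\<bar> < 1/2" .
    then show ?thesis unfolding f_def indicator_def by (auto simp: abs_less_iff add.commute)
  qed
  then have "ennreal (real n) * ?Y = (\<integral>\<^sup>+z. f z \<partial>lborel)"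
    using nn_integral_real_affine[of f "of_int c" b] \<open>c \<noteq> 0\<close> by (simp add: n(1))
  also have "\<dots> = ennreal (real n) * ?X"
    unfolding f_def nn_integral_wrap_interval[OF assms(1)] by (simp add: ennreal_of_nat_eq_real_of_nat)
  finally show ?thesis
    using n(2) by (simp add: ennreal_mult_cancel_left)
qed

section \<open>The uniform distribution and its finite powers\<close>

definition unif :: "real measure" where
  "unif = uniform_measure lborel {-1/2<..<1/2}"

lemma prob_space_unif: "prob_space unif"
  unfolding unif_def by (rule prob_space_uniform_measure) auto

lemma sets_unif [simp, measurable_cong]: "sets unif = sets borel"
  and space_unif [simp]: "space unif = UNIV"
  unfolding unif_def by auto

lemma measurable_unif [simp]: "measurable M unif = borel_measurable M"
  by (rule measurable_cong_sets) auto

lemma nn_integral_unif: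
  fixes f :: "real \<Rightarrow> ennreal"
  assumes [measurable]: "f \<in> borel_measurable borel"
  shows "(\<integral>\<^sup>+x. f x \<partial>unif) = (\<integral>\<^sup>+x. indicator {-1/2<..<1/2} x * f x \<partial>lborel)"
  unfolding unif_def
  by (subst nn_integral_uniform_measure) (auto simp: mult.commute divide_ennreal_def)

lemma nn_integral_unif_wrap_affine:
  fixes h :: "real \<Rightarrow> ennreal" and c :: int
  assumes [measurable]: "h \<in> borel_measurable borel" and "c \<noteq> 0"
  shows "(\<integral>\<^sup>+y. h (wrap (of_int c * y + b)) \<partial>unif) = (\<integral>\<^sup>+y. h y \<partial>unif)"
proof -
  have "(\<integral>\<^sup>+y. h (wrap (of_int c * y + b)) \<partial>unif)
      = (\<integral>\<^sup>+y. indicator {-1/2<..<1/2} y * h (wrap (of_int c * y + b)) \<partial>lborel)"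
    by (rule nn_integral_unif) measurable
  then show ?thesis using nn_integral_wrap_affine[OF assms, of b] nn_integral_unif[OF assms(1)] by simp
qed

interpretation unif_product: product_sigma_finite "\<lambda>_::nat. unif"
  by (simp add: product_sigma_finite_def prob_space_unif prob_space_imp_sigma_finite)

interpretation lborel_product: product_sigma_finite "\<lambda>_::nat. (lborel::real measure)"
  by (simp add: product_sigma_finite_def sigma_finite_lborel)

abbreviation \<mu> :: "nat \<Rightarrow> (nat \<Rightarrow> real) measure" where
  "\<mu> n \<equiv> PiM {..<n} (\<lambda>_. unif)"

abbreviation \<Lambda> :: "nat \<Rightarrow> (nat \<Rightarrow> real) measure" where
  "\<Lambda> n \<equiv> PiM {..<n} (\<lambda>_. lborel)"

lemma prob_space_\<mu>: "prob_space (\<mu> n)"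
  by (rule prob_space_PiM) (rule prob_space_unif)

lemma sets_\<mu>: "sets (\<mu> n) = sets (\<Lambda> n)"
  by (rule sets_PiM_cong) auto

lemma space_\<mu>: "space (\<mu> n) = space (\<Lambda> n)"
  by (simp add: space_PiM)

lemma measurable_\<mu>_component: "j < n \<Longrightarrow> (\<lambda>x. x j) \<in> borel_measurable (\<mu> n)"
  using measurable_component_singleton[of j "{..<n}" "\<lambda>_. unif"] by simp

lemma measurable_\<mu>_sum: "(\<lambda>x. \<Sum>j<n. x j) \<in> borel_measurable (\<mu> n)"
  by (rule borel_measurable_sum) (auto intro: measurable_\<mu>_component)

lemma cube_sets: "cube n \<in> sets (\<Lambda> n)"
  unfolding cube_def by (rule sets_PiM_I_finite) auto

lemma emeasure_\<mu>_eq_lborel: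
  assumes E: "E \<in> sets (\<Lambda> n)" and "E \<subseteq> cube n"
  shows "emeasure (\<mu> n) E = emeasure (\<Lambda> n) E"
proof -
  have "density (\<Lambda> n) (indicator (cube n)) = \<mu> n"
  proof (rule unif_product.PiM_eqI)
    fix A assume A: "\<And>i. i \<in> {..<n} \<Longrightarrow> A i \<in> sets unif"
    have "emeasure (density (\<Lambda> n) (indicator (cube n))) (Pi\<^sub>E {..<n} A)
        = emeasure (\<Lambda> n) (Pi\<^sub>E {..<n} (\<lambda>i. {-1/2<..<1/2} \<inter> A i))"
      using A by (subst emeasure_restricted[OF cube_sets])
        (auto intro!: sets_PiM_I_finite arg_cong[where f="emeasure (\<Lambda> n)"] simp: cube_def)
    also have "\<dots> = (\<Prod>i<n. emeasure unif (A i))"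
      using A by (subst lborel_product.emeasure_PiM)
        (auto intro!: prod.cong simp: unif_def divide_ennreal_def)
    finally show "emeasure (density (\<Lambda> n) (indicator (cube n))) (Pi\<^sub>E {..<n} A)
        = (\<Prod>i\<in>{..<n}. emeasure unif (A i))" by simp
  qed (auto simp: sets_\<mu>)
  then have "emeasure (\<mu> n) E = emeasure (\<Lambda> n) (cube n \<inter> E)"
    using emeasure_restricted[OF cube_sets E] by metis
  then show ?thesis using \<open>E \<subseteq> cube n\<close> by (simp add: Int_absorb1)
qed

lemma AE_\<mu>_cube: "AE x in \<mu> n. x \<in> cube n"
proof (rule AE_I[where N="space (\<mu> n) - cube n"])
  have cube: "cube n \<in> sets (\<mu> n)" using cube_sets sets_\<mu> by blast
  have "emeasure (\<mu> n) (cube n) = (\<Prod>i<n. emeasure unif {-1/2<..<1/2})"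
    unfolding cube_def by (rule unif_product.emeasure_PiM) auto
  then have "emeasure (\<mu> n) (cube n) = 1" by (simp add: unif_def)
  then show "emeasure (\<mu> n) (space (\<mu> n) - cube n) = 0"
    using emeasure_compl[OF cube] prob_space.emeasure_space_1[OF prob_space_\<mu>] by simp
  show "space (\<mu> n) - cube n \<in> sets (\<mu> n)" using cube by auto
qed auto

section \<open>Triangular maps modulo one preserve the uniform product measure\<close>

lemma indicator_PiE_eq_prod:
  assumes "finite I" "x \<in> extensional I"
  shows "indicator (Pi\<^sub>E I A) x = (\<Prod>i\<in>I. indicator (A i) (x i) :: 'a :: comm_semiring_1)"
proof (cases "x \<in> Pi\<^sub>E I A")
  case True
  then show ?thesis by (auto simp: PiE_iff intro!: prod.neutral)
next
  case False
  then obtain i where "i \<in> I" "x i \<notin> A i" using assms(2) by (auto simp: PiE_iff)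
  then have "(\<Prod>i\<in>I. indicator (A i) (x i) :: 'a) = 0"
    using assms(1) by (intro prod_zero bexI) auto
  then show ?thesis using False by simp
qed

lemma emeasure_distr_PiE:
  assumes f: "f \<in> measurable M (PiM I N)" and "finite I" and A: "\<And>i. i \<in> I \<Longrightarrow> A i \<in> sets (N i)"
  shows "emeasure (distr M (PiM I N) f) (Pi\<^sub>E I A) = (\<integral>\<^sup>+x. (\<Prod>i\<in>I. indicator (A i) (f x i)) \<partial>M)"
proof -
  have PiE: "Pi\<^sub>E I A \<in> sets (PiM I N)" using A \<open>finite I\<close> by (auto intro: sets_PiM_I_finite)
  have "emeasure (distr M (PiM I N) f) (Pi\<^sub>E I A) = (\<integral>\<^sup>+x. indicator (Pi\<^sub>E I A) x \<partial>distr M (PiM I N) f)"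
    using PiE by simp
  also have "\<dots> = (\<integral>\<^sup>+x. indicator (Pi\<^sub>E I A) (f x) \<partial>M)"
    using PiE f by (intro nn_integral_distr) auto
  also have "\<dots> = (\<integral>\<^sup>+x. (\<Prod>i\<in>I. indicator (A i) (f x i)) \<partial>M)"
    using measurable_space[OF f] \<open>finite I\<close>
    by (intro nn_integral_cong indicator_PiE_eq_prod) (auto simp: space_PiM PiE_def)
  finally show ?thesis .
qed

definition tri_wrap :: "nat \<Rightarrow> (nat \<Rightarrow> int) \<Rightarrow> (nat \<Rightarrow> (nat \<Rightarrow> real) \<Rightarrow> real) \<Rightarrow> nat \<Rightarrow> (nat \<Rightarrow> real) \<Rightarrow> real"
  where "tri_wrap m c g k x = wrap (of_int (c k) * x (m + k) + g k (restrict x {..<m + k}))"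

lemma measurable_tri_wrap:
  assumes g: "\<And>k. g k \<in> borel_measurable (\<mu> (m + k))" and "k < n"
  shows "tri_wrap m c g k \<in> borel_measurable (\<mu> (m + n))"
proof -
  have "(\<lambda>x. restrict x {..<m + k}) \<in> measurable (\<mu> (m + n)) (\<mu> (m + k))"
    using \<open>k < n\<close> by (intro measurable_restrict_subset) auto
  from measurable_comp[OF this g[of k]]
  have [measurable]: "(\<lambda>x. g k (restrict x {..<m + k})) \<in> borel_measurable (\<mu> (m + n))"
    by (simp add: comp_def)
  have [measurable]: "(\<lambda>x. x (m + k)) \<in> borel_measurable (\<mu> (m + n))"
    using \<open>k < n\<close> by (intro measurable_\<mu>_component) simp
  show ?thesis unfolding tri_wrap_def[abs_def] by measurable
qed

lemma measurable_tri_wrap_vector: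
  assumes "\<And>k. g k \<in> borel_measurable (\<mu> (m + k))"
  shows "(\<lambda>x. \<lambda>k\<in>{..<n}. tri_wrap m c g k x) \<in> measurable (\<mu> (m + n)) (\<mu> n)"
  using measurable_tri_wrap[OF assms] by (intro measurable_restrict) auto

text \<open>Integrating out the last variable, which enters only the last factor and there through
  an integer affine map, removes one factor; the first \<open>m\<close> variables are integrated out at the end.\<close>
lemma nn_integral_tri_wrap_indicators:
  assumes c: "\<And>k. c k \<noteq> 0" and g: "\<And>k. g k \<in> borel_measurable (\<mu> (m + k))"
    and A: "\<And>k. k < n \<Longrightarrow> A k \<in> sets borel"
  shows "(\<integral>\<^sup>+x. (\<Prod>k<n. indicator (A k) (tri_wrap m c g k x)) \<partial>\<mu> (m + n)) = (\<Prod>k<n. emeasure unif (A k))"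
  using A
proof (induction n)
  case 0
  then show ?case using prob_space.emeasure_space_1[OF prob_space_\<mu>, of m] by simp
next
  case (Suc n)
  let ?F = "\<lambda>n x. \<Prod>k<n. indicator (A k) (tri_wrap m c g k x) :: ennreal"
  have [measurable]: "A n \<in> sets borel" using Suc.prems by simp
  have F: "?F n' \<in> borel_measurable (\<mu> (m + n'))" if "n' \<le> Suc n" for n'
    using Suc.prems that measurable_tri_wrap[OF g, of _ n']
    by (intro borel_measurable_prod_ennreal) (auto intro!: measurable_compose[OF _ borel_measurable_indicator])
  have upd: "?F (Suc n) (x(m + n := y))
      = ?F n x * indicator (A n) (wrap (of_int (c n) * y + g n (restrict x {..<m + n})))" for x y
  proof -
    have "restrict (x(m + n := y)) {..<m + k} = restrict x {..<m + k}" if "k \<le> n" for k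
      using that by (auto simp: restrict_def)
    then show ?thesis by (simp add: tri_wrap_def)
  qed
  have "{..<m + Suc n} = insert (m + n) {..<m + n}" by auto
  then have "(\<integral>\<^sup>+x. ?F (Suc n) x \<partial>\<mu> (m + Suc n))
      = (\<integral>\<^sup>+x. (\<integral>\<^sup>+y. ?F (Suc n) (x(m + n := y)) \<partial>unif) \<partial>\<mu> (m + n))"
    using F[of "Suc n"] by (simp add: unif_product.product_nn_integral_insert)
  also have "\<dots> = (\<integral>\<^sup>+x. ?F n x * emeasure unif (A n) \<partial>\<mu> (m + n))"
  proof (rule nn_integral_cong)
    fix x
    have "(\<integral>\<^sup>+y. ?F (Suc n) (x(m + n := y)) \<partial>unif)
        = ?F n x * (\<integral>\<^sup>+y. indicator (A n) (wrap (of_int (c n) * y + g n (restrict x {..<m + n}))) \<partial>unif)"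
      unfolding upd by (rule nn_integral_cmult) measurable
    also have "\<dots> = ?F n x * emeasure unif (A n)"
      using c[of n] by (simp add: nn_integral_unif_wrap_affine)
    finally show "(\<integral>\<^sup>+y. ?F (Suc n) (x(m + n := y)) \<partial>unif) = ?F n x * emeasure unif (A n)" .
  qed
  also have "\<dots> = (\<integral>\<^sup>+x. ?F n x \<partial>\<mu> (m + n)) * emeasure unif (A n)"
    using F[of n] by (simp add: nn_integral_multc)
  finally show ?case using Suc by simp
qed

lemma distr_tri_wrap:
  assumes c: "\<And>k. c k \<noteq> 0" and g: "\<And>k. g k \<in> borel_measurable (\<mu> (m + k))"
  shows "distr (\<mu> (m + n)) (\<mu> n) (\<lambda>x. \<lambda>k\<in>{..<n}. tri_wrap m c g k x) = \<mu> n"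
proof (rule unif_product.PiM_eqI)
  fix A assume A: "\<And>i. i \<in> {..<n} \<Longrightarrow> A i \<in> sets unif"
  have "emeasure (distr (\<mu> (m + n)) (\<mu> n) (\<lambda>x. \<lambda>k\<in>{..<n}. tri_wrap m c g k x)) (Pi\<^sub>E {..<n} A)
      = (\<integral>\<^sup>+x. (\<Prod>k<n. indicator (A k) (tri_wrap m c g k x)) \<partial>\<mu> (m + n))"
    using A by (subst emeasure_distr_PiE[OF measurable_tri_wrap_vector[OF g]]) auto
  also have "\<dots> = (\<Prod>k<n. emeasure unif (A k))"
    using A by (intro nn_integral_tri_wrap_indicators[OF c g]) auto
  finally show "emeasure (distr (\<mu> (m + n)) (\<mu> n) (\<lambda>x. \<lambda>k\<in>{..<n}. tri_wrap m c g k x)) (Pi\<^sub>E {..<n} A)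
      = (\<Prod>i\<in>{..<n}. emeasure unif (A i))" by simp
qed simp_all

definition shear_first :: "nat \<Rightarrow> int \<Rightarrow> (nat \<Rightarrow> int) \<Rightarrow> (nat \<Rightarrow> real) \<Rightarrow> nat \<Rightarrow> real" where
  "shear_first n c d x =
     (\<lambda>i\<in>{..<n}. if i = 0 then wrap (of_int c * x 0 + (\<Sum>j\<in>{1..<n}. of_int (d j) * x j)) else x i)"

lemma measurable_shear_first: "shear_first n c d \<in> measurable (\<mu> n) (\<mu> n)"
  unfolding shear_first_def
proof (rule measurable_restrict)
  fix i assume "i \<in> {..<n}"
  then have [measurable]: "(\<lambda>x. x 0) \<in> borel_measurable (\<mu> n)" "(\<lambda>x. x i) \<in> borel_measurable (\<mu> n)"
    by (auto intro!: measurable_\<mu>_component)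
  have [measurable]: "(\<lambda>x. \<Sum>j\<in>{1..<n}. of_int (d j) * x j) \<in> borel_measurable (\<mu> n)"
    by (rule borel_measurable_sum) (auto intro!: borel_measurable_times measurable_\<mu>_component)
  show "(\<lambda>x. if i = 0 then wrap (of_int c * x 0 + (\<Sum>j\<in>{1..<n}. of_int (d j) * x j)) else x i)
      \<in> measurable (\<mu> n) unif"
    unfolding measurable_unif by measurable
qed

lemma borel_measurable_prod_indicator_\<mu>:
  assumes f: "f \<in> measurable M (\<mu> n)" and A: "\<And>i. i < n \<Longrightarrow> A i \<in> sets borel"
  shows "(\<lambda>x. \<Prod>i<n. indicator (A i) (f x i) :: ennreal) \<in> borel_measurable M"
proof (rule borel_measurable_prod_ennreal)
  fix i assume i: "i \<in> {..<n}"
  then have "(\<lambda>x. f x i) \<in> borel_measurable M"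
    by (intro measurable_compose[OF f measurable_\<mu>_component]) auto
  from measurable_compose[OF this borel_measurable_indicator[OF A]] i
  show "(\<lambda>x. indicator (A i) (f x i)) \<in> borel_measurable M" by simp
qed

lemma prod_indicator_shear_first_upd_0:
  assumes "n \<ge> 1"
  shows "(\<Prod>i<n. indicator (A i) (shear_first n c d (x(0 := y)) i) :: ennreal)
       = (\<Prod>i\<in>{1..<n}. indicator (A i) (x i))
         * indicator (A 0) (wrap (of_int c * y + (\<Sum>j\<in>{1..<n}. of_int (d j) * x j)))"
proof -
  have split: "{..<n} = insert 0 {1..<n}" using assms by auto
  have "(\<Sum>j\<in>{1..<n}. of_int (d j) * (x(0 := y)) j) = (\<Sum>j\<in>{1..<n}. of_int (d j) * x j)"
    by (intro sum.cong) auto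
  then have first: "shear_first n c d (x(0 := y)) 0 = wrap (of_int c * y + (\<Sum>j\<in>{1..<n}. of_int (d j) * x j))"
    using assms unfolding shear_first_def by simp
  have "(\<Prod>i<n. indicator (A i) (shear_first n c d (x(0 := y)) i) :: ennreal)
      = indicator (A 0) (shear_first n c d (x(0 := y)) 0)
        * (\<Prod>i\<in>{1..<n}. indicator (A i) (shear_first n c d (x(0 := y)) i))"
    unfolding split by (rule prod.insert) auto
  also have "(\<Prod>i\<in>{1..<n}. indicator (A i) (shear_first n c d (x(0 := y)) i) :: ennreal)
      = (\<Prod>i\<in>{1..<n}. indicator (A i) (x i))"
    by (intro prod.cong) (auto simp: shear_first_def)
  finally show ?thesis unfolding first by (simp only: mult.commute)
qed

lemma distr_shear_first:
  assumes "n \<ge> 1" and "c \<noteq> 0"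
  shows "distr (\<mu> n) (\<mu> n) (shear_first n c d) = \<mu> n"
proof (rule unif_product.PiM_eqI)
  fix A assume A: "\<And>i. i \<in> {..<n} \<Longrightarrow> A i \<in> sets unif"
  define I where "I = {1..<n}"
  have I: "{..<n} = insert 0 I" "0 \<notin> I" "finite I" using \<open>n \<ge> 1\<close> unfolding I_def by auto
  have A_I: "A i \<in> sets borel" if "i \<in> I" for i using A that by (auto simp: I_def)
  have [measurable]: "A 0 \<in> sets borel" using A \<open>n \<ge> 1\<close> by simp
  let ?F = "\<lambda>x. \<Prod>i<n. indicator (A i) (shear_first n c d x i) :: ennreal"
  have "?F \<in> borel_measurable (\<mu> n)"
    by (rule borel_measurable_prod_indicator_\<mu>[OF measurable_shear_first]) (use A in auto)
  then have F: "?F \<in> borel_measurable (PiM (insert 0 I) (\<lambda>_. unif))"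
    unfolding I(1) .
  have "emeasure (distr (\<mu> n) (\<mu> n) (shear_first n c d)) (Pi\<^sub>E {..<n} A) = (\<integral>\<^sup>+x. ?F x \<partial>\<mu> n)"
    by (rule emeasure_distr_PiE[OF measurable_shear_first]) (use A in auto)
  also have "\<dots> = (\<integral>\<^sup>+x. (\<integral>\<^sup>+y. ?F (x(0 := y)) \<partial>unif) \<partial>PiM I (\<lambda>_. unif))"
    using I(2,3) F unfolding I(1) by (intro unif_product.product_nn_integral_insert) auto
  also have "\<dots> = (\<integral>\<^sup>+x. (\<Prod>i\<in>I. indicator (A i) (x i)) * emeasure unif (A 0) \<partial>PiM I (\<lambda>_. unif))"
    unfolding prod_indicator_shear_first_upd_0[OF \<open>n \<ge> 1\<close>] I_def[symmetric] using \<open>c \<noteq> 0\<close>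
    by (intro nn_integral_cong, subst nn_integral_cmult) (simp_all add: nn_integral_unif_wrap_affine)
  also have "\<dots> = (\<integral>\<^sup>+x. (\<Prod>i\<in>I. indicator (A i) (x i)) \<partial>PiM I (\<lambda>_. unif)) * emeasure unif (A 0)"
    using A_I by (intro nn_integral_multc borel_measurable_prod_ennreal)
      (simp add: measurable_compose[OF measurable_component_singleton borel_measurable_indicator])
  also have "(\<integral>\<^sup>+x. (\<Prod>i\<in>I. indicator (A i) (x i)) \<partial>PiM I (\<lambda>_. unif)) = (\<Prod>i\<in>I. emeasure unif (A i))"
    using A_I I(3) by (subst unif_product.product_nn_integral_prod) (auto intro!: prod.cong)
  also have "(\<Prod>i\<in>I. emeasure unif (A i)) * emeasure unif (A 0) = (\<Prod>i\<in>{..<n}. emeasure unif (A i))"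
    unfolding I(1) using I(2,3) by (simp add: mult.commute)
  finally show "emeasure (distr (\<mu> n) (\<mu> n) (shear_first n c d)) (Pi\<^sub>E {..<n} A)
      = (\<Prod>i\<in>{..<n}. emeasure unif (A i))" .
qed simp_all

section \<open>The periodic Laplacian\<close>

lemma sum_lessThan_rotate:
  fixes n k :: nat
  shows "(\<Sum>i<n. f ((i + k) mod n)) = (\<Sum>i<n. f i :: 'a :: comm_monoid_add)"
proof (induction k arbitrary: f)
  case 0
  then show ?case by (intro sum.cong) auto
next
  case (Suc k)
  have rotate1: "(\<Sum>i<n. g ((i + 1) mod n)) = (\<Sum>i<n. g i)" for g :: "nat \<Rightarrow> 'a"
  proof (cases n)
    case (Suc m)
    have "(\<Sum>i<Suc m. g ((i + 1) mod Suc m)) = (\<Sum>i<m. g (Suc i)) + g 0"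
      by (simp add: sum.cong[OF refl, of _ "\<lambda>i. g ((i + 1) mod Suc m)" "\<lambda>i. g (Suc i)"])
    then show ?thesis using Suc sum.lessThan_Suc_shift[of g m] by (simp add: add.commute)
  qed simp
  have "(\<Sum>i<n. f ((i + Suc k) mod n)) = (\<Sum>i<n. f (((i + 1) mod n + k) mod n))"
    by (simp add: mod_add_left_eq)
  also have "\<dots> = (\<Sum>i<n. f ((i + k) mod n))"
    using rotate1[of "\<lambda>j. f ((j + k) mod n)"] .
  finally show ?case using Suc.IH by simp
qed

lemma sum_lap_eq_0:
  assumes "L \<ge> 1"
  shows "(\<Sum>i<L. lap L a i) = 0"
proof -
  have "(\<Sum>i<L. lap L a i)
      = (\<Sum>i<L. a ((i + (L - 1)) mod L)) - 2 * (\<Sum>i<L. a ((i + 0) mod L)) + (\<Sum>i<L. a ((i + 1) mod L))"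
    using assms unfolding lap_def by (simp add: sum.distrib sum_subtractf sum_distrib_left)
  then show ?thesis by (simp only: sum_lessThan_rotate)
qed

lemma lap_eq_second_diff:
  assumes "1 \<le> j" "j < L - 1"
  shows "lap L a j = a (j - 1) - 2 * a j + a (j + 1)"
proof -
  have shift: "j + L - 1 = (j - 1) + L" using assms by simp
  have "(j + L - 1) mod L = ((j - 1) + L) mod L" by (simp only: shift)
  also have "\<dots> = (j - 1) mod L" by (rule mod_add_self2)
  also have "\<dots> = j - 1" using assms by (intro mod_less) simp
  finally have "(j + L - 1) mod L = j - 1" .
  moreover have "j mod L = j" "(j + 1) mod L = j + 1" using assms by auto
  ultimately show ?thesis unfolding lap_def by simp
qed

lemma lap_0: "L \<ge> 2 \<Longrightarrow> lap L a 0 = a (L - 1) - 2 * a 0 + a 1"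
  by (simp add: lap_def)

lemma sum_second_diff_telescope:
  fixes x :: "nat \<Rightarrow> real"
  shows "(\<Sum>j\<in>{1..<n+1}. x (j - 1) - 2 * x j + x (j + 1) :: real) = (x (n + 1) - x n) - (x 1 - x 0)"
  by (induction n) (auto simp: algebra_simps)

lemma weighted_sum_second_diff:
  fixes x :: "nat \<Rightarrow> real"
  shows "(real n + 2) * (x 1 - x 0) + (\<Sum>j\<in>{1..<n+1}. (real n + 1 - real j) * (x (j - 1) - 2 * x j + x (j + 1)))
     = x (n + 1) - 2 * x 0 + (x 1 :: real)"
proof (induction n)
  case (Suc n)
  let ?d = "\<lambda>j. x (j - 1) - 2 * x j + x (j + 1)"
  have "(\<Sum>j\<in>{1..<Suc n + 1}. (real (Suc n) + 1 - real j) * ?d j)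
      = (\<Sum>j\<in>{1..<n + 1}. (real (Suc n) + 1 - real j) * ?d j) + ?d (n + 1)"
    by simp
  also have "(\<Sum>j\<in>{1..<n + 1}. (real (Suc n) + 1 - real j) * ?d j)
      = (\<Sum>j\<in>{1..<n + 1}. (real n + 1 - real j) * ?d j) + (\<Sum>j\<in>{1..<n + 1}. ?d j)"
    by (simp add: sum.distrib[symmetric] algebra_simps)
  finally show ?case using Suc sum_second_diff_telescope[of x n] by (simp add: algebra_simps)
qed simp

text \<open>\<open>\<Delta>\<alpha>\<^sub>0\<close> is the one entry of \<open>(\<Delta>\<alpha>\<^sub>i)\<^bsub>i<L-1\<^esub>\<close> that is not triangular in \<open>\<alpha>\<close>; this identity recovers it
  from the triangular ones, with the nonzero coefficient \<open>L\<close> on \<open>\<alpha>\<^sub>1 - \<alpha>\<^sub>0\<close>.\<close>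
lemma lap_0_eq_weighted_sum:
  assumes "L \<ge> 2"
  shows "lap L a 0 = real L * (a 1 - a 0) + (\<Sum>j\<in>{1..<L-1}. of_int (int L - 1 - int j) * lap L a j)"
proof -
  obtain n where n: "L = n + 2" using assms by (metis add.commute le_Suc_ex)
  have sum: "(\<Sum>j\<in>{1..<L-1}. of_int (int L - 1 - int j) * lap L a j)
      = (\<Sum>j\<in>{1..<n+1}. (real n + 1 - real j) * (a (j - 1) - 2 * a j + a (j + 1)))"
    using n by (intro sum.cong) (auto simp: lap_eq_second_diff)
  have "real L = real n + 2" "a (L - 1) = a (n + 1)" using n by simp_all
  moreover have "lap L a 0 = (real n + 2) * (a 1 - a 0)
      + (\<Sum>j\<in>{1..<n+1}. (real n + 1 - real j) * (a (j - 1) - 2 * a j + a (j + 1)))"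
    using weighted_sum_second_diff[of n a] lap_0[OF assms, of a] calculation(2) by linarith
  ultimately show ?thesis unfolding sum by simp
qed

section \<open>The law of \<open>\<omega>\<close>\<close>

lemma wrap_int_comb_of_wraps:
  "wrap (of_int c * wrap u + (\<Sum>j\<in>J. of_int (d j) * wrap (x j)))
     = wrap (of_int c * u + (\<Sum>j\<in>J. of_int (d j) * x j))"
  by (rule wrap_eq_if_diff_int[where n = "- (c * round u + (\<Sum>j\<in>J. d j * round (x j)))"])
     (simp add: wrap_def algebra_simps sum.distrib sum_subtractf)

definition second_diff_head :: "nat \<Rightarrow> (nat \<Rightarrow> real) \<Rightarrow> real" where
  "second_diff_head k x = (if k = 0 then - x 0 else x (k - 1) - 2 * x k)"

text \<open>The map \<open>\<alpha> \<mapsto> (\<alpha>\<^sub>1 - \<alpha>\<^sub>0, \<Delta>\<alpha>\<^sub>1, \<dots>, \<Delta>\<alpha>\<^bsub>N-1\<^esub>)\<close> (interior second differences) taken mod 1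
  is triangular: its \<open>k\<close>-th entry is \<open>\<alpha>\<^bsub>k+1\<^esub>\<close> plus a function of \<open>\<alpha>\<^sub>0, \<dots>, \<alpha>\<^sub>k\<close>.\<close>
abbreviation diff_wrap :: "nat \<Rightarrow> (nat \<Rightarrow> real) \<Rightarrow> nat \<Rightarrow> real" where
  "diff_wrap N a \<equiv> \<lambda>k\<in>{..<N}. tri_wrap 1 (\<lambda>_. 1) second_diff_head k a"

lemma measurable_second_diff_head: "second_diff_head k \<in> borel_measurable (\<mu> (1 + k))"
proof -
  have [measurable]: "(\<lambda>x. x j) \<in> borel_measurable (\<mu> (1 + k))" if "j \<le> k" for j
    using that by (intro measurable_\<mu>_component) simp
  show ?thesis unfolding second_diff_head_def[abs_def] by measurable
qed

lemma distr_diff_wrap: "distr (\<mu> (1 + N)) (\<mu> N) (diff_wrap N) = \<mu> N"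
  by (intro distr_tri_wrap measurable_second_diff_head) simp

lemma measurable_diff_wrap: "diff_wrap N \<in> measurable (\<mu> (1 + N)) (\<mu> N)"
  by (rule measurable_tri_wrap_vector) (rule measurable_second_diff_head)

definition lap_wrap :: "nat \<Rightarrow> (nat \<Rightarrow> real) \<Rightarrow> nat \<Rightarrow> real" where
  "lap_wrap L a = (\<lambda>i\<in>{..<L - 1}. wrap (lap L a i))"

lemma lap_wrap_eq_shear_first:
  assumes "L \<ge> 2"
  shows "lap_wrap L a = shear_first (L - 1) (int L) (\<lambda>j. int L - 1 - int j) (diff_wrap (L - 1) a)"
proof
  fix i
  have interior: "diff_wrap (L - 1) a j = wrap (lap L a j)" if "1 \<le> j" "j < L - 1" for j
  proof -
    have "j - 1 < 1 + j" by simp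
    then show ?thesis using that
      by (simp add: tri_wrap_def second_diff_head_def lap_eq_second_diff algebra_simps)
  qed
  have "diff_wrap (L - 1) a 0 = wrap (a 1 - a 0)"
    using assms by (simp add: tri_wrap_def second_diff_head_def)
  moreover have "(\<Sum>j\<in>{1..<L - 1}. of_int (int L - 1 - int j) * diff_wrap (L - 1) a j)
      = (\<Sum>j\<in>{1..<L - 1}. of_int (int L - 1 - int j) * wrap (lap L a j))"
    using interior by (intro sum.cong refl) (metis atLeastLessThan_iff)
  ultimately have "shear_first (L - 1) (int L) (\<lambda>j. int L - 1 - int j) (diff_wrap (L - 1) a) 0
      = wrap (of_int (int L) * wrap (a 1 - a 0) + (\<Sum>j\<in>{1..<L - 1}. of_int (int L - 1 - int j) * wrap (lap L a j)))"
    using assms by (simp add: shear_first_def)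
  also have "\<dots> = wrap (of_int (int L) * (a 1 - a 0) + (\<Sum>j\<in>{1..<L - 1}. of_int (int L - 1 - int j) * lap L a j))"
    by (rule wrap_int_comb_of_wraps)
  also have "\<dots> = wrap (lap L a 0)"
    using lap_0_eq_weighted_sum[OF assms, of a] by simp
  finally have "shear_first (L - 1) (int L) (\<lambda>j. int L - 1 - int j) (diff_wrap (L - 1) a) 0
      = wrap (lap L a 0)" .
  then show "lap_wrap L a i = shear_first (L - 1) (int L) (\<lambda>j. int L - 1 - int j) (diff_wrap (L - 1) a) i"
    using interior[of i] by (cases "i = 0") (auto simp: lap_wrap_def shear_first_def)
qed

lemma measurable_lap_wrap:
  assumes "L \<ge> 1"
  shows "lap_wrap L \<in> measurable (\<mu> L) (\<mu> (L - 1))"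
  unfolding lap_wrap_def
proof (rule measurable_restrict)
  fix i
  have [measurable]: "(\<lambda>a. a (j mod L)) \<in> borel_measurable (\<mu> L)" for j
    using assms by (intro measurable_\<mu>_component) simp
  show "(\<lambda>a. wrap (lap L a i)) \<in> measurable (\<mu> L) unif"
    unfolding measurable_unif lap_def by measurable
qed

lemma distr_lap_wrap:
  assumes "L \<ge> 1"
  shows "distr (\<mu> L) (\<mu> (L - 1)) (lap_wrap L) = \<mu> (L - 1)"
proof (cases "L = 1")
  case True
  then have "lap_wrap L = diff_wrap (L - 1)" by (simp add: lap_wrap_def fun_eq_iff)
  then show ?thesis using distr_diff_wrap[of "L - 1"] assms by simp
next
  case False
  then have L: "L \<ge> 2" "1 + (L - 1) = L" using assms by auto
  have "distr (\<mu> L) (\<mu> (L - 1)) (lap_wrap L)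
      = distr (distr (\<mu> L) (\<mu> (L - 1)) (diff_wrap (L - 1))) (\<mu> (L - 1)) (shear_first (L - 1) (int L) (\<lambda>j. int L - 1 - int j))"
    unfolding lap_wrap_eq_shear_first[OF L(1)]
    using measurable_diff_wrap[of "L - 1"] L(2)
    by (subst distr_distr[OF measurable_shear_first]) (simp_all add: comp_def)
  also have "\<dots> = \<mu> (L - 1)"
    using distr_diff_wrap[of "L - 1"] L by (simp add: distr_shear_first)
  finally show ?thesis .
qed

definition int_sum_ext :: "nat \<Rightarrow> (nat \<Rightarrow> real) \<Rightarrow> nat \<Rightarrow> real" where
  "int_sum_ext L y = (\<lambda>i\<in>{..<L}. if i < L - 1 then y i else wrap (- (\<Sum>j<L - 1. y j)))"

lemma measurable_int_sum_ext: "int_sum_ext L \<in> measurable (\<mu> (L - 1)) (\<Lambda> L)"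
  unfolding int_sum_ext_def
proof (rule measurable_restrict)
  fix i
  have [measurable]: "(\<lambda>y. \<Sum>j<L - 1. y j) \<in> borel_measurable (\<mu> (L - 1))"
    by (rule measurable_\<mu>_sum)
  show "(\<lambda>y. if i < L - 1 then y i else wrap (- (\<Sum>j<L - 1. y j))) \<in> measurable (\<mu> (L - 1)) lborel"
    by (cases "i < L - 1") (simp_all add: measurable_\<mu>_component)
qed

text \<open>Since \<open>\<Sum>\<^sub>i \<Delta>\<alpha>\<^sub>i = 0\<close>, the last coordinate of \<open>\<omega>\<close> is determined by the others.\<close>
lemma omega_eq_int_sum_ext:
  assumes "L \<ge> 1"
  shows "omega L a = int_sum_ext L (lap_wrap L a)"
proof
  fix i
  have "(\<Sum>j<L - 1. lap L a j) + lap L a (L - 1) = 0"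
    using sum_lap_eq_0[OF assms, of a] assms by (metis Suc_diff_1 less_le_trans sum.lessThan_Suc zero_less_one)
  then have "wrap (lap L a (L - 1)) = wrap (- (\<Sum>j<L - 1. wrap (lap L a j)))"
    by (intro wrap_eq_if_diff_int[where n = "- (\<Sum>j<L - 1. round (lap L a j))"])
       (simp add: wrap_def sum_subtractf)
  moreover have "(\<Sum>j<L - 1. lap_wrap L a j) = (\<Sum>j<L - 1. wrap (lap L a j))"
    by (simp add: lap_wrap_def)
  moreover have "omega L a = (\<lambda>i\<in>{..<L}. wrap (lap L a i))"
    by (simp add: omega_def wrap_def)
  ultimately show "omega L a i = int_sum_ext L (lap_wrap L a) i"
    using assms by (cases "i < L - 1"; cases "i = L - 1") (auto simp: int_sum_ext_def lap_wrap_def)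
qed

lemma emeasure_omega_preimage:
  assumes "L \<ge> 1" and "A \<in> sets (\<Lambda> L)"
  shows "emeasure (\<mu> L) {a \<in> space (\<mu> L). omega L a \<in> A}
       = emeasure (\<mu> (L - 1)) {y \<in> space (\<mu> (L - 1)). int_sum_ext L y \<in> A}"
proof -
  let ?B = "int_sum_ext L -` A \<inter> space (\<mu> (L - 1))"
  have B: "?B \<in> sets (\<mu> (L - 1))" using measurable_sets[OF measurable_int_sum_ext assms(2)] .
  have "{a \<in> space (\<mu> L). omega L a \<in> A} = lap_wrap L -` ?B \<inter> space (\<mu> L)"
    using omega_eq_int_sum_ext[OF assms(1)] measurable_space[OF measurable_lap_wrap[OF assms(1)]] by auto
  then have "emeasure (\<mu> L) {a \<in> space (\<mu> L). omega L a \<in> A} = emeasure (distr (\<mu> L) (\<mu> (L - 1)) (lap_wrap L)) ?B"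
    using emeasure_distr[OF measurable_lap_wrap[OF assms(1)] B] by simp
  also have "\<dots> = emeasure (\<mu> (L - 1)) ?B" unfolding distr_lap_wrap[OF assms(1)] ..
  finally show ?thesis by (simp add: Int_def conj_commute)
qed

section \<open>Surface measure on the integer hyperplanes\<close>

lemma AE_\<mu>_wrap_neg_sum: "AE y in \<mu> n. wrap (- (\<Sum>j<n. y j)) \<noteq> -1/2"
proof (cases "n = 0")
  case False
  let ?shear = "shear_first n (-1) (\<lambda>_. -1)"
  have "AE x in unif. x \<noteq> -1/2"
    unfolding unif_def using AE_lborel_singleton by (intro AE_uniform_measureI) auto
  then have component: "AE z in \<mu> n. z 0 \<noteq> -1/2"
    using False by (intro AE_PiM_component prob_space_unif) auto
  have transfer: "(AE y in \<mu> n. ?shear y 0 \<noteq> -1/2) \<longleftrightarrow> (AE z in distr (\<mu> n) (\<mu> n) ?shear. z 0 \<noteq> -1/2)"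
  proof (rule AE_distr_iff[OF measurable_shear_first, symmetric])
    have [measurable]: "(\<lambda>z. z 0) \<in> borel_measurable (\<mu> n)"
      using False by (intro measurable_\<mu>_component) simp
    show "{z \<in> space (\<mu> n). z 0 \<noteq> -1/2} \<in> sets (\<mu> n)" by measurable
  qed
  have "distr (\<mu> n) (\<mu> n) ?shear = \<mu> n"
    using False by (intro distr_shear_first) auto
  then have "AE y in \<mu> n. ?shear y 0 \<noteq> -1/2"
    using component unfolding transfer by metis
  moreover have "?shear y 0 = wrap (- (\<Sum>j<n. y j))" for y
  proof -
    have "{..<n} = insert 0 {1..<n}" using False by auto
    then show ?thesis using False by (simp add: shear_first_def sum_negf)
  qed
  ultimately show ?thesis by simp
qed (simp add: wrap_def)

lemma add_of_int_in_half_interval_iff: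
  "of_int k + x \<in> {-1/2<..<1/2} \<longleftrightarrow> k = - round x \<and> wrap x \<noteq> -1/2"
proof
  assume k: "of_int k + x \<in> {-1/2<..<1/2}"
  then have "round (x + of_int k) = 0" by (intro round_unique) auto
  then have "k = - round x" by (simp add: round_add_of_int)
  then show "k = - round x \<and> wrap x \<noteq> -1/2" using k by (auto simp: wrap_def)
next
  assume "k = - round x \<and> wrap x \<noteq> -1/2"
  then show "of_int k + x \<in> {-1/2<..<1/2}"
    using wrap_ge[of x] wrap_less[of x] by (auto simp: wrap_def)
qed

lemma measurable_hyp_param: "hyp_param L k \<in> measurable (\<Lambda> (L - 1)) (\<Lambda> L)"
  unfolding hyp_param_def
proof (rule measurable_restrict)
  fix i
  have component: "(\<lambda>y. y j) \<in> borel_measurable (\<Lambda> (L - 1))" if "j < L - 1" for j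
    using measurable_component_singleton[of j "{..<L - 1}" "\<lambda>_. lborel"] that by simp
  have "(\<lambda>y. \<Sum>j<L - 1. y j) \<in> borel_measurable (\<Lambda> (L - 1))"
    by (intro borel_measurable_sum component) simp
  then have "(\<lambda>y. of_int k - (\<Sum>j<L - 1. y j)) \<in> borel_measurable (\<Lambda> (L - 1))"
    by measurable
  show "(\<lambda>y. if i < L - 1 then y i else of_int k - (\<Sum>j<L - 1. y j)) \<in> measurable (\<Lambda> (L - 1)) lborel"
    using component[of i] by (cases "i < L - 1") simp_all
qed

lemma hyp_param_in_cube_iff:
  assumes "L \<ge> 1" and "y \<in> extensional {..<L - 1}"
  shows "hyp_param L k y \<in> cube L \<longleftrightarrow> y \<in> cube (L - 1) \<and> of_int k - (\<Sum>j<L - 1. y j) \<in> {-1/2<..<1/2}"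
proof -
  have "{..<L} = insert (L - 1) {..<L - 1}" using assms by auto
  then show ?thesis using assms by (auto simp: cube_def hyp_param_def PiE_iff)
qed

text \<open>Of the integer translates of the hyperplane, at most one meets the cube above a given point
  \<open>y\<close>, and there the graph map agrees with \<open>int_sum_ext\<close>.\<close>
lemma hyp_param_preimage_cube:
  assumes "L \<ge> 1"
  shows "hyp_param L k -` (A \<inter> cube L) \<inter> space (\<Lambda> (L - 1))
       = {y \<in> space (\<Lambda> (L - 1)) \<inter> cube (L - 1). wrap (- (\<Sum>j<L - 1. y j)) \<noteq> -1/2
            \<and> int_sum_ext L y \<in> A \<and> k = - round (- (\<Sum>j<L - 1. y j))}"
proof -
  have "y \<in> hyp_param L k -` (A \<inter> cube L) \<inter> space (\<Lambda> (L - 1)) \<longleftrightarrow>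
      y \<in> space (\<Lambda> (L - 1)) \<inter> cube (L - 1) \<and> wrap (- (\<Sum>j<L - 1. y j)) \<noteq> -1/2
        \<and> int_sum_ext L y \<in> A \<and> k = - round (- (\<Sum>j<L - 1. y j))" for y
  proof -
    let ?s = "\<Sum>j<L - 1. y j"
    have "k = - round (- ?s) \<Longrightarrow> hyp_param L k y = int_sum_ext L y"
      by (auto simp: hyp_param_def int_sum_ext_def wrap_def)
    moreover have "y \<in> space (\<Lambda> (L - 1)) \<Longrightarrow>
        hyp_param L k y \<in> cube L \<longleftrightarrow> y \<in> cube (L - 1) \<and> k = - round (- ?s) \<and> wrap (- ?s) \<noteq> -1/2"
      using hyp_param_in_cube_iff[OF assms, of y k] add_of_int_in_half_interval_iff[of k "- ?s"]
      by (simp add: space_PiM PiE_def)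
    ultimately show ?thesis by auto
  qed
  then show ?thesis by blast
qed

lemma surf_inter_cube:
  assumes "L \<ge> 1" and A: "A \<in> sets (\<Lambda> L)"
  shows "surf L (A \<inter> cube L)
       = ennreal (sqrt (real L)) * emeasure (\<mu> (L - 1)) {y \<in> space (\<mu> (L - 1)). int_sum_ext L y \<in> A}"
proof -
  define N where "N = L - 1"
  define E where "E = {y \<in> space (\<Lambda> N) \<inter> cube N. wrap (- (\<Sum>j<N. y j)) \<noteq> -1/2 \<and> int_sum_ext L y \<in> A}"
  define S where "S k = hyp_param L k -` (A \<inter> cube L) \<inter> space (\<Lambda> N)" for k
  have S_eq: "S k = {y \<in> E. k = - round (- (\<Sum>j<N. y j))}" for k
    unfolding S_def E_def N_def hyp_param_preimage_cube[OF assms(1)] by auto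
  have S_sets: "S k \<in> sets (\<Lambda> N)" for k
    unfolding S_def N_def using A cube_sets by (intro measurable_sets[OF measurable_hyp_param]) auto
  have UN: "(\<Union>k. S k) = E" by (auto simp: S_eq)
  have E_sets: "E \<in> sets (\<Lambda> N)" unfolding UN[symmetric] using S_sets by auto
  have "surf L (A \<inter> cube L) = ennreal (sqrt (real L)) * (\<integral>\<^sup>+k. emeasure (\<Lambda> N) (S k) \<partial>count_space UNIV)"
    unfolding surf_def S_def N_def by (rule nn_integral_cmult) simp
  also have "(\<integral>\<^sup>+k. emeasure (\<Lambda> N) (S k) \<partial>count_space UNIV) = emeasure (\<Lambda> N) E"
    unfolding UN[symmetric] using S_sets
    by (intro emeasure_UN_countable[symmetric]) (auto simp: disjoint_family_on_def S_eq)
  also have "\<dots> = emeasure (\<mu> N) E"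
    using E_sets by (intro emeasure_\<mu>_eq_lborel[symmetric]) (auto simp: E_def)
  also have "\<dots> = emeasure (\<mu> N) {y \<in> space (\<mu> N). int_sum_ext L y \<in> A}"
  proof (rule emeasure_eq_AE)
    show "AE y in \<mu> N. y \<in> E \<longleftrightarrow> y \<in> {y \<in> space (\<mu> N). int_sum_ext L y \<in> A}"
      using AE_\<mu>_cube[of N] AE_\<mu>_wrap_neg_sum[of N]
      by eventually_elim (auto simp: E_def space_\<mu>)
    show "E \<in> sets (\<mu> N)" using E_sets sets_\<mu> by blast
    show "{y \<in> space (\<mu> N). int_sum_ext L y \<in> A} \<in> sets (\<mu> N)"
      using measurable_sets[OF measurable_int_sum_ext A] unfolding N_def by (simp add: Int_def conj_commute)
  qed
  finally show ?thesis unfolding N_def .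
qed

lemma surf_cube:
  assumes "L \<ge> 1"
  shows "surf L (cube L) = ennreal (sqrt (real L))"
proof -
  have "cube L = space (\<Lambda> L) \<inter> cube L" by (auto simp: cube_def space_PiM PiE_iff)
  moreover have "{y \<in> space (\<mu> (L - 1)). int_sum_ext L y \<in> space (\<Lambda> L)} = space (\<mu> (L - 1))"
    using measurable_space[OF measurable_int_sum_ext] by auto
  ultimately show ?thesis
    using surf_inter_cube[OF assms, of "space (\<Lambda> L)"] prob_space.emeasure_space_1[OF prob_space_\<mu>]
    by simp
qed

theorem proposition4:
  fixes L :: nat
  assumes "L \<ge> 1"
  defines "P \<equiv> PiM {..<L} (\<lambda>_. uniform_measure lborel {-1/2<..<(1/2::real)})"
  shows "\<forall>A \<in> sets (PiM {..<L} (\<lambda>_. (lborel :: real measure))).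
           emeasure P {a \<in> space P. omega L a \<in> A} = norm_surf L A"
proof
  fix A assume A: "A \<in> sets (PiM {..<L} (\<lambda>_. (lborel :: real measure)))"
  have P: "P = \<mu> L" unfolding P_def unif_def ..
  have pos: "ennreal (sqrt (real L)) \<noteq> 0" "ennreal (sqrt (real L)) \<noteq> \<top>" using assms(1) by auto
  show "emeasure P {a \<in> space P. omega L a \<in> A} = norm_surf L A"
    unfolding P norm_surf_def surf_cube[OF assms(1)] surf_inter_cube[OF assms(1) A]
      emeasure_omega_preimage[OF assms(1) A]
    by (simp only: mult.commute[of "ennreal _"] ennreal_mult_divide_eq[OF pos])
qed

end
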